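(* Let $G=K_{s_1,s_2,\dots,s_n}$ be a simple complete multipartite graph with $n$ parts and let $q$ be a prime power with $q\ge n-1$. Then $\operatorname{mr}(\mathbb{F}_q,G)\le 3$.
   Context: $K_{s_1,\dots,s_n}$ is the join of independent sets of sizes $s_1,\dots,s_n$ (every two vertices in different parts adjacent, no edges inside a part). For a field $F$ and a simple graph $G$ on vertices $\{1,\dots,n\}$, $S(F,G)$ is the set of symmetric $n\times n$ matrices $A$ over $F$ with $a_{ij}\neq 0$ for $i\ne j$ iff $ij$ is an edge of $G$ (diagonal entries unrestricted), and $\operatorname{mr}(F,G)=\min\{\operatorname{rank}A: A\in S(F,G)\}$. *)

theory Defs
  imports "Jordan_Normal_Form.DL_Rank"
begin

text \<open>A graph on vertex set {0..<N} is given by an adjacency predicate E.\<close>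
definition S_mat :: "'a::field itself \<Rightarrow> nat \<Rightarrow> (nat \<Rightarrow> nat \<Rightarrow> bool) \<Rightarrow> 'a mat set" where
  "S_mat T N E = {A. A \<in> carrier_mat N N \<and> transpose_mat A = A \<and>
     (\<forall>i<N. \<forall>j<N. i \<noteq> j \<longrightarrow> (A $$ (i,j) \<noteq> 0 \<longleftrightarrow> E i j))}"

definition mr :: "'a::field itself \<Rightarrow> nat \<Rightarrow> (nat \<Rightarrow> nat \<Rightarrow> bool) \<Rightarrow> nat" where
  "mr T N E = (LEAST r. \<exists>A \<in> S_mat T N E. vec_space.rank N A = r)"

definition complete_multipartite ::
  "nat \<Rightarrow> (nat \<Rightarrow> nat \<Rightarrow> bool) \<Rightarrow> nat \<Rightarrow> (nat \<Rightarrow> nat) \<Rightarrow> bool" where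
  "complete_multipartite N E n s \<longleftrightarrow>
     (\<exists>part :: nat \<Rightarrow> nat.
        (\<forall>v<N. part v < n) \<and>
        (\<forall>i<n. card {v. v < N \<and> part v = i} = s i \<and> s i \<ge> 1) \<and>
        (\<forall>u<N. \<forall>v<N. E u v \<longleftrightarrow> part u \<noteq> part v))"

end

theory Submission
  imports Defs
begin

text \<open>
  Give every part i of the complete multipartite graph a point
  (a i : b i) of the projective line over the field; since the line over a field
  with q elements has q + 1 points, the n parts can receive pairwise distinct
  points as soon as n - 1 \<le> q. Putting \<alpha> u = a (part u) and \<beta> u = b (part u),
  the symmetric matrix with entries (\<alpha> u \<beta> v - \<alpha> v \<beta> u)^2 has a nonzero
  off-diagonal entry exactly between vertices of different parts, so it lies
  in S(F,G). Expanding the square writes it as a sum of three rank-one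
  matrices, hence its rank is at most 3.
\<close>

text \<open>A matrix whose entries are a sum of k products f t u * g t v is a sum of
  k rank-one matrices, hence has rank at most k.\<close>
lemma rank_sum_of_products_le:
  fixes f g :: "nat \<Rightarrow> nat \<Rightarrow> 'a::field"
  shows "vec_space.rank n (mat n nc (\<lambda>(u,v). \<Sum>t<k. f t u * g t v)) \<le> k"
proof (induction k)
  case 0
  have zero: "mat n nc (\<lambda>(u,v). \<Sum>t<0. f t u * g t v) = (0\<^sub>m n nc :: 'a mat)"
    by (rule eq_matI) auto
  show ?case unfolding zero vec_space.rank_0I by simp
next
  case (Suc k)
  define B :: "'a mat" where "B = mat n nc (\<lambda>(u,v). \<Sum>t<k. f t u * g t v)"
  define R :: "'a mat" where "R = mat n nc (\<lambda>(u,v). f k u * g k v)"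
  have carrier: "B \<in> carrier_mat n nc" "R \<in> carrier_mat n nc"
    by (simp_all add: B_def R_def)
  have sum_split: "mat n nc (\<lambda>(u,v). \<Sum>t<Suc k. f t u * g t v) = B + R"
    by (rule eq_matI) (auto simp: B_def R_def)
  have rank_R: "vec_space.rank n R \<le> 1"
    by (rule vec_space.rank_le_1_product_entries[OF carrier(2), of "f k" "g k"])
      (auto simp: R_def)
  have "vec_space.rank n (B + R) \<le> vec_space.rank n B + vec_space.rank n R"
    using carrier by (rule vec_space.rank_subadditive)
  then show ?case using Suc.IH rank_R sum_split by (simp add: B_def)
qed

text \<open>The projective line over a finite field with q elements has q + 1 points:
  the points (1 : 0) and (c : 1) for c in the field.\<close>
lemma distinct_projective_points:
  fixes m :: nat
  assumes "m \<le> card (UNIV :: 'a set) + 1"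
  obtains a b :: "nat \<Rightarrow> 'a::{finite,field}"
  where "\<And>i j. i < m \<Longrightarrow> j < m \<Longrightarrow> i \<noteq> j \<Longrightarrow> a i * b j \<noteq> a j * b i"
proof -
  obtain e :: "nat \<Rightarrow> 'a" where e: "bij_betw e {0..<card (UNIV :: 'a set)} UNIV"
    using ex_bij_betw_nat_finite[of "UNIV :: 'a set"] by auto
  define a :: "nat \<Rightarrow> 'a" where "a i = (if i = 0 then 1 else e (i - 1))" for i
  define b :: "nat \<Rightarrow> 'a" where "b i = (if i = 0 then 0 else 1)" for i
  have "a i * b j \<noteq> a j * b i" if ij: "i < m" "j < m" "i \<noteq> j" for i j
  proof (cases "i = 0 \<or> j = 0")
    case False
    then have "i - 1 \<in> {0..<card (UNIV :: 'a set)}" "j - 1 \<in> {0..<card (UNIV :: 'a set)}"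
        "i - 1 \<noteq> j - 1"
      using ij assms by auto
    then have "e (i - 1) \<noteq> e (j - 1)"
      using e unfolding bij_betw_def inj_on_def by blast
    then show ?thesis using False by (simp add: a_def b_def)
  qed (use ij in \<open>auto simp: a_def b_def\<close>)
  then show ?thesis by (rule that)
qed

lemma mr_le_rank:
  assumes "A \<in> S_mat TYPE('a::field) N E"
  shows "mr TYPE('a) N E \<le> vec_space.rank N A"
  unfolding mr_def using assms by (intro Least_le) blast

lemma mr_le_3_of_projective_labelling:
  fixes \<alpha> \<beta> :: "nat \<Rightarrow> 'a::field"
  assumes adj: "\<And>u v. u < N \<Longrightarrow> v < N \<Longrightarrow> u \<noteq> v \<Longrightarrow>
      E u v \<longleftrightarrow> \<alpha> u * \<beta> v \<noteq> \<alpha> v * \<beta> u"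
  shows "mr TYPE('a) N E \<le> 3"
proof -
  define f :: "nat \<Rightarrow> nat \<Rightarrow> 'a" where
    "f t u = [\<alpha> u ^ 2, -2 * \<alpha> u * \<beta> u, \<beta> u ^ 2] ! t" for t u
  define g :: "nat \<Rightarrow> nat \<Rightarrow> 'a" where
    "g t v = [\<beta> v ^ 2, \<alpha> v * \<beta> v, \<alpha> v ^ 2] ! t" for t v
  define A :: "'a mat" where "A = mat N N (\<lambda>(u,v). \<Sum>t<3. f t u * g t v)"
  have entry: "A $$ (u,v) = (\<alpha> u * \<beta> v - \<alpha> v * \<beta> u)^2" if "u < N" "v < N" for u v
    using that by (simp add: A_def f_def g_def numeral_3_eq_3 power2_eq_square algebra_simps)
  have carrier: "A \<in> carrier_mat N N" by (simp add: A_def)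
  have symmetric: "transpose_mat A = A"
    by (rule eq_matI) (use carrier in \<open>auto simp: entry power2_commute\<close>)
  have "A \<in> S_mat TYPE('a) N E"
    unfolding S_mat_def using carrier symmetric by (auto simp: entry adj)
  then have "mr TYPE('a) N E \<le> vec_space.rank N A" by (rule mr_le_rank)
  also have "\<dots> \<le> 3" unfolding A_def by (rule rank_sum_of_products_le)
  finally show ?thesis .
qed

theorem mainTheorem18:
  fixes N n :: nat and E :: "nat \<Rightarrow> nat \<Rightarrow> bool" and s :: "nat \<Rightarrow> nat"
  assumes "complete_multipartite N E n s"
    and "n - 1 \<le> card (UNIV :: 'a set)"
  shows "mr TYPE('a::{finite,field}) N E \<le> 3"
proof -
  obtain part where part_lt: "\<forall>v<N. part v < n"
    and adj: "\<forall>u<N. \<forall>v<N. E u v \<longleftrightarrow> part u \<noteq> part v"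
    using assms(1) unfolding complete_multipartite_def by blast
  have "n \<le> card (UNIV :: 'a set) + 1" using assms(2) by linarith
  then obtain a b :: "nat \<Rightarrow> 'a"
    where distinct: "\<And>i j. i < n \<Longrightarrow> j < n \<Longrightarrow> i \<noteq> j \<Longrightarrow> a i * b j \<noteq> a j * b i"
    using distinct_projective_points by blast
  show ?thesis
  proof (rule mr_le_3_of_projective_labelling[where \<alpha> = "a \<circ> part" and \<beta> = "b \<circ> part"])
    fix u v assume "u < N" "v < N" "u \<noteq> v"
    then show "E u v \<longleftrightarrow> (a \<circ> part) u * (b \<circ> part) v \<noteq> (a \<circ> part) v * (b \<circ> part) u"
      using adj part_lt distinct[of "part u" "part v"] by auto
  qed
qed

end
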